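(* Let $\alpha$ be a nonzero real number. Let $p_1,p_2\in\mathbb H^2$ be two points lying on a common geodesic with $N$. (1) If $p_1$ and $p_2$ lie on the same ray starting at $N$, then the segment of this ray joining $p_1$ and $p_2$ minimizes $E_\alpha$ among all curves in $\mathbb H^2$ joining $p_1$ and $p_2$, for every such $\alpha$. (2) Suppose $\alpha>0$. If $N$ lies on the geodesic segment between $p_1$ and $p_2$, then this geodesic segment minimizes $E_\alpha$ among all curves in $\mathbb H^2$ joining $p_1$ and $p_2$.
   Context: The hyperbolic plane is $\mathbb H^2=\{(x,y,z):x^2+y^2-z^2=-1,\ z>0\}$ with the metric induced by $\langle x,y\rangle_\epsilon=x_1y_1+x_2y_2-x_3y_3$. It is parametrized by $\Psi(u,v)=(\sinh u\cos v,\sinh u\sin v,\cosh u)$, and $N=(0,0,1)$. The hyperbolic distance from $\Psi(u,v)$ to $N$ is $u$. A ray starting at $N$ is a geodesic $u\mapsto\Psi(u,v_0)$, $u\ge0$, for some fixed $v_0$. For a curve $\gamma$, the energy is $E_\alpha[\gamma]=\int_\gamma\mathsf d^\alpha\,ds$, where $s$ is hyperbolic arc length and $\mathsf d$ is the hyperbolic distance to $N$. In coordinates, $$E_\alpha[\gamma]=\int u^\alpha\sqrt{u'^2+\sinh^2(u)v'^2}\,dt.$$ The paper discards the case $\alpha=0$. *)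

theory Defs
  imports "HOL-Analysis.Analysis"
begin

definition lor :: "real^3 \<Rightarrow> real^3 \<Rightarrow> real" where
  "lor x y = x$1 * y$1 + x$2 * y$2 - x$3 * y$3"

definition H2 :: "(real^3) set" where
  "H2 = {x. lor x x = -1 \<and> x$3 > 0}"

definition NP :: "real^3" where
  "NP = vector [0, 0, 1]"

definition hdist :: "real^3 \<Rightarrow> real^3 \<Rightarrow> real" where
  "hdist p q = arcosh (- lor p q)"

definition Psi :: "real \<Rightarrow> real \<Rightarrow> real^3" where
  "Psi u v = vector [sinh u * cos v, sinh u * sin v, cosh u]"

text \<open>Unit-speed geodesic through N in direction v0, parametrized by signed
  arc length s: equals Psi s v0 for s >= 0 and Psi (-s) (v0 + pi) for s <= 0.\<close>
definition geod :: "real \<Rightarrow> real \<Rightarrow> real^3" where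
  "geod v0 s = vector [sinh s * cos v0, sinh s * sin v0, cosh s]"

definition curve_joining :: "(real \<Rightarrow> real^3) \<Rightarrow> real \<Rightarrow> real \<Rightarrow> real^3 \<Rightarrow> real^3 \<Rightarrow> bool" where
  "curve_joining \<gamma> a b p q \<longleftrightarrow>
     a \<le> b \<and> \<gamma> piecewise_C1_differentiable_on {a..b} \<and> \<gamma> ` {a..b} \<subseteq> H2
     \<and> \<gamma> a = p \<and> \<gamma> b = q"

definition energy :: "real \<Rightarrow> (real \<Rightarrow> real^3) \<Rightarrow> real \<Rightarrow> real \<Rightarrow> ennreal" where
  "energy \<alpha> \<gamma> a b =
     (\<integral>\<^sup>+ t\<in>{a..b}. ennreal (hdist (\<gamma> t) NP powr \<alpha> *
        sqrt (lor (vector_derivative \<gamma> (at t)) (vector_derivative \<gamma> (at t)))) \<partial>lborel)"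

end

theory Submission
  imports Defs
begin

text \<open>
  Let d be the hyperbolic distance to N and F = powr_antideriv \<alpha> an antiderivative of u powr \<alpha>.
  Since |d'| is at most the hyperbolic speed, F(d) changes along an arc avoiding N by at most the
  energy of the arc. Applied to a terminal arc on which d \<ge> \<epsilon>, with \<epsilon> \<rightarrow> 0, this bounds the energy
  of every curve from p to q below by the integral of u powr \<alpha> between d(p) and d(q), which is the
  energy of the radial segment.

  For 0 < \<alpha> and a geodesic through N we use the calibration F(d) cos (v - v0) in polar coordinates
  (u, v) around N, with F(u) = u powr (\<alpha> + 1) / (\<alpha> + 1). Its differential has hyperbolic norm at
  most d powr \<alpha>, also at N where it vanishes to order \<alpha> + 1, so the difference of its values at
  the end points bounds the energy of every curve. On the geodesic through N both equal
  F(u1) + F(u2).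
\<close>

section \<open>Real analysis\<close>

lemma has_integral_abs_le_nn_integral:
  fixes f :: "real \<Rightarrow> real"
  assumes f: "(f has_integral I) S"
  shows "ennreal \<bar>I\<bar> \<le> (\<integral>\<^sup>+x\<in>S. ennreal \<bar>f x\<bar> \<partial>lborel)"
proof (cases "(\<integral>\<^sup>+x\<in>S. ennreal \<bar>f x\<bar> \<partial>lborel) = \<infinity>")
  case False
  then obtain r where r: "(\<integral>\<^sup>+x\<in>S. ennreal \<bar>f x\<bar> \<partial>lborel) = ennreal r" "0 \<le> r"
    by (cases "(\<integral>\<^sup>+x\<in>S. ennreal \<bar>f x\<bar> \<partial>lborel)" rule: ennreal_cases) auto
  define g where "g x = \<bar>indicator S x *\<^sub>R f x\<bar>" for x
  have "g \<in> lebesgue \<rightarrow>\<^sub>M borel"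
    unfolding g_def by (intro borel_measurable_abs has_integral_implies_lebesgue_measurable[OF f])
  moreover have "(\<lambda>x. ennreal (g x)) = (\<lambda>x. ennreal \<bar>f x\<bar> * indicator S x)"
    by (auto simp: g_def fun_eq_iff split: split_indicator)
  ultimately have "(g has_integral r) UNIV"
    using r by (subst has_integral_iff_nn_integral_lebesgue) (auto simp: g_def nn_integral_completion)
  moreover have "g = (\<lambda>x. if x \<in> S then \<bar>f x\<bar> else 0)"
    by (auto simp: g_def fun_eq_iff)
  ultimately have "((\<lambda>x. \<bar>f x\<bar>) has_integral r) S"
    by (simp add: has_integral_restrict_UNIV)
  then have "\<bar>I\<bar> \<le> r"
    using has_integral_norm_bound_integral_component[OF f, of _ r 1] by simp
  then show ?thesis
    using r by (simp add: ennreal_leI)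
qed simp

lemma abs_diff_le_nn_integral_of_deriv_bound:
  fixes h h' E :: "real \<Rightarrow> real"
  assumes "a \<le> b" and "finite S" and "continuous_on {a..b} h"
    and deriv: "\<And>t. t \<in> {a<..<b} - S \<Longrightarrow> (h has_real_derivative h' t) (at t)"
    and bound: "\<And>t. t \<in> {a<..<b} - S \<Longrightarrow> \<bar>h' t\<bar> \<le> E t"
  shows "ennreal \<bar>h b - h a\<bar> \<le> (\<integral>\<^sup>+t\<in>{a..b}. ennreal (E t) \<partial>lborel)"
proof -
  have "(h' has_integral h b - h a) {a..b}"
    using assms by (intro fundamental_theorem_of_calculus_interior_strong[of S])
      (auto simp: has_real_derivative_iff_has_vector_derivative)
  then have "ennreal \<bar>h b - h a\<bar> \<le> (\<integral>\<^sup>+t\<in>{a..b}. ennreal \<bar>h' t\<bar> \<partial>lborel)"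
    by (rule has_integral_abs_le_nn_integral)
  also have "\<dots> \<le> (\<integral>\<^sup>+t\<in>{a..b}. ennreal (E t) \<partial>lborel)"
  proof (rule nn_integral_mono_AE)
    have "AE t in lborel. \<forall>y\<in>S \<union> {a, b}. t \<noteq> y"
      using \<open>finite S\<close> by (intro AE_ball_countable' AE_lborel_singleton countable_finite) auto
    then show "AE t in lborel. ennreal \<bar>h' t\<bar> * indicator {a..b} t \<le> ennreal (E t) * indicator {a..b} t"
      by eventually_elim (auto intro!: ennreal_leI bound split: split_indicator)
  qed
  finally show ?thesis .
qed

lemma nn_integral_Icc_le_of_subintervals:
  fixes f :: "real \<Rightarrow> ennreal"
  assumes f[measurable]: "f \<in> borel_measurable borel" and "lo < hi"
    and bound: "\<And>\<epsilon>. lo < \<epsilon> \<Longrightarrow> \<epsilon> < hi \<Longrightarrow> (\<integral>\<^sup>+x\<in>{\<epsilon>..hi}. f x \<partial>lborel) \<le> X"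
  shows "(\<integral>\<^sup>+x\<in>{lo..hi}. f x \<partial>lborel) \<le> X"
proof -
  define \<epsilon> where "\<epsilon> n = lo + (hi - lo) / (real n + 2)" for n :: nat
  have \<epsilon>: "lo < \<epsilon> n" "\<epsilon> n < hi" for n
  proof -
    have "0 < (hi - lo) / (real n + 2)" "(hi - lo) / (real n + 2) < hi - lo"
      using \<open>lo < hi\<close> by (auto simp: divide_less_eq)
    then show "lo < \<epsilon> n" "\<epsilon> n < hi"
      by (auto simp: \<epsilon>_def)
  qed
  have "decseq \<epsilon>"
    using \<open>lo < hi\<close> unfolding \<epsilon>_def by (intro decseq_SucI add_left_mono divide_left_mono) auto
  have "(\<Union>n. {\<epsilon> n..hi}) = {lo<..hi}"
  proof
    show "(\<Union>n. {\<epsilon> n..hi}) \<subseteq> {lo<..hi}"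
      by (auto dest: less_le_trans[OF \<epsilon>(1)])
    show "{lo<..hi} \<subseteq> (\<Union>n. {\<epsilon> n..hi})"
    proof
      fix x
      assume x: "x \<in> {lo<..hi}"
      obtain n :: nat where "(hi - lo) / (x - lo) < real n"
        using reals_Archimedean2 by blast
      then have "\<epsilon> n \<le> x"
        using x by (simp add: \<epsilon>_def divide_less_eq field_simps)
      with x show "x \<in> (\<Union>n. {\<epsilon> n..hi})"
        by auto
    qed
  qed
  have "(\<integral>\<^sup>+x\<in>{lo..hi}. f x \<partial>lborel) = (\<integral>\<^sup>+x\<in>{lo<..hi}. f x \<partial>lborel)"
    by (intro nn_integral_cong_AE)
      (use AE_lborel_singleton[of lo] in \<open>eventually_elim, auto split: split_indicator\<close>)
  also have "\<dots> = emeasure (density lborel f) (\<Union>n. {\<epsilon> n..hi})"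
    unfolding \<open>(\<Union>n. {\<epsilon> n..hi}) = {lo<..hi}\<close> by (simp add: emeasure_density)
  also have "\<dots> = (SUP n. emeasure (density lborel f) {\<epsilon> n..hi})"
    using \<open>decseq \<epsilon>\<close> by (intro SUP_emeasure_incseq[symmetric]) (auto simp: incseq_def decseq_def)
  also have "\<dots> \<le> X"
    using bound \<epsilon> by (intro SUP_least) (simp add: emeasure_density)
  finally show ?thesis .
qed

lemma has_real_derivative_zero_of_bound:
  fixes f R :: "real \<Rightarrow> real"
  assumes "f t = 0" and "(R \<longlongrightarrow> 0) (at t)" and "eventually (\<lambda>s. \<bar>f s\<bar> \<le> R s * \<bar>s - t\<bar>) (at t)"
  shows "(f has_real_derivative 0) (at t)"
proof -
  have "eventually (\<lambda>s. norm (f s / (s - t)) \<le> R s) (at t)"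
    using assms(3) eventually_at_in_open[OF open_UNIV UNIV_I]
    by eventually_elim (simp add: abs_divide divide_le_eq)
  then have "((\<lambda>s. f s / (s - t)) \<longlongrightarrow> 0) (at t)"
    by (rule Lim_null_comparison[OF _ assms(2)])
  then show ?thesis
    unfolding has_field_derivative_iff using assms(1) by simp
qed

lemma last_crossing:
  fixes g :: "real \<Rightarrow> real"
  assumes g: "continuous_on {a..b} g" and "a \<le> b" "g a \<le> y" "y \<le> g b"
  obtains c where "c \<in> {a..b}" "g c = y" "\<And>t. t \<in> {c..b} \<Longrightarrow> y \<le> g t"
proof -
  define T where "T = {t \<in> {a..b}. g t \<le> y}"
  have "closed T"
    unfolding T_def by (rule continuous_on_closed_Collect_le[OF g continuous_on_const closed_atLeastAtMost])
  moreover have "a \<in> T" "bdd_above T"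
    using assms by (auto simp: T_def bdd_above_def)
  ultimately have "Sup T \<in> T"
    by (intro closed_contains_Sup) auto
  have above: "y < g t" if "t \<in> {a..b}" "Sup T < t" for t
    using that cSup_upper[OF _ \<open>bdd_above T\<close>, of t] by (force simp: T_def)
  have "g (Sup T) = y"
  proof (rule ccontr)
    assume "g (Sup T) \<noteq> y"
    with \<open>Sup T \<in> T\<close> have "g (Sup T) < y"
      by (simp add: T_def)
    moreover obtain x where "Sup T \<le> x" "x \<le> b" "g x = y"
      using IVT'[of g "Sup T" y b] \<open>Sup T \<in> T\<close> assms continuous_on_subset[OF g]
      by (fastforce simp: T_def)
    ultimately show False
      using above[of x] \<open>Sup T \<in> T\<close> by (cases "x = Sup T") (auto simp: T_def)
  qed
  show thesis
  proof (rule that[of "Sup T"])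
    show "Sup T \<in> {a..b}"
      using \<open>Sup T \<in> T\<close> by (simp add: T_def)
    fix t
    assume "t \<in> {Sup T..b}"
    then show "y \<le> g t"
      using above[of t] \<open>g (Sup T) = y\<close> \<open>Sup T \<in> T\<close> by (cases "t = Sup T") (auto simp: T_def)
  qed fact
qed

lemma subinterval_above_level:
  fixes g :: "real \<Rightarrow> real"
  assumes g: "continuous_on {a..b} g" and "a \<le> b"
    and "min (g a) (g b) \<le> y" "y \<le> max (g a) (g b)"
  obtains c e where "a \<le> c" "c \<le> e" "e \<le> b" "\<And>t. t \<in> {c..e} \<Longrightarrow> y \<le> g t"
    "min (g c) (g e) = y" "max (g c) (g e) = max (g a) (g b)"
proof (cases "g a \<le> g b")
  case True
  with assms obtain c where "c \<in> {a..b}" "g c = y" "\<And>t. t \<in> {c..b} \<Longrightarrow> y \<le> g t"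
    by (auto elim: last_crossing[OF g \<open>a \<le> b\<close>])
  then show thesis
    using that[of c b] True assms(4) by (simp add: min_def max_def)
next
  case False
  have "continuous_on {-b..-a} (\<lambda>s. g (-s))"
    by (rule continuous_on_compose2[OF g]) (auto intro: continuous_intros)
  with assms False obtain c where c: "c \<in> {-b..-a}" "g (-c) = y" "\<And>t. t \<in> {c..-a} \<Longrightarrow> y \<le> g (-t)"
    by (auto elim: last_crossing[of "-b" "-a" "\<lambda>s. g (-s)" y])
  have "y \<le> g t" if "t \<in> {a..-c}" for t
    using c(3)[of "-t"] that by auto
  moreover have "min (g a) (g (-c)) = y" "max (g a) (g (-c)) = max (g a) (g b)"
    using c(2) assms(4) False by (auto simp: min_def max_def)
  ultimately show thesis
    using that[of a "-c"] c(1) by auto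
qed

lemma cauchy_schwarz_2: "((a::real) * c + b * d)\<^sup>2 \<le> (a\<^sup>2 + b\<^sup>2) * (c\<^sup>2 + d\<^sup>2)"
  using zero_le_power2[of "a * d - b * c"] by (simp add: power2_eq_square algebra_simps)

lemma vector3_eq_sum_axis:
  "(vector [a, b, c] :: real^3) = a *\<^sub>R axis 1 1 + b *\<^sub>R axis 2 1 + c *\<^sub>R axis 3 1"
  by (simp add: vec_eq_iff forall_3 axis_def)

lemma vector3_has_vector_derivative:
  assumes "(f has_real_derivative f') (at t)" "(g has_real_derivative g') (at t)"
    "(h has_real_derivative h') (at t)"
  shows "((\<lambda>t. vector [f t, g t, h t] :: real^3) has_vector_derivative vector [f', g', h']) (at t)"
proof -
  have scale: "((\<lambda>t. \<phi> t *\<^sub>R c) has_vector_derivative \<phi>' *\<^sub>R c) (at t)"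
    if "(\<phi> has_real_derivative \<phi>') (at t)" for \<phi> \<phi>' and c :: "real^3"
    using has_vector_derivative_scaleR[OF that has_vector_derivative_const] by simp
  show ?thesis
    unfolding vector3_eq_sum_axis by (intro has_vector_derivative_add scale assms)
qed

lemma continuous_on_vector3:
  assumes "continuous_on S f" "continuous_on S g" "continuous_on S h"
  shows "continuous_on S (\<lambda>x. vector [f x, g x, h x] :: real^3)"
  unfolding vector3_eq_sum_axis by (intro continuous_intros assms)

lemma has_vector_derivative_nth:
  fixes \<gamma> :: "real \<Rightarrow> real^'n"
  assumes "(\<gamma> has_vector_derivative v) (at t)"
  shows "((\<lambda>s. \<gamma> s $ i) has_real_derivative v $ i) (at t)"
  using bounded_linear.has_vector_derivative[OF bounded_linear_vec_nth assms]
  by (simp add: has_real_derivative_iff_has_vector_derivative)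

lemma piecewise_C1_differentiable_onE:
  assumes "\<gamma> piecewise_C1_differentiable_on {a..b}"
  obtains S where "finite S" "continuous_on {a..b} \<gamma>"
    "\<And>t. t \<in> {a..b} - S \<Longrightarrow> (\<gamma> has_vector_derivative vector_derivative \<gamma> (at t)) (at t)"
  using assms unfolding piecewise_C1_differentiable_on_def C1_differentiable_on_def
  by (metis vector_derivative_at)

section \<open>The hyperboloid\<close>

lemma lor_NP: "lor x NP = - x$3"
  by (simp add: lor_def NP_def)

lemma hdist_NP: "hdist x NP = arcosh (x$3)"
  by (simp add: hdist_def lor_NP)

lemma Psi_nth [simp]:
  "Psi u v $ 1 = sinh u * cos v" "Psi u v $ 2 = sinh u * sin v" "Psi u v $ 3 = cosh u"
  by (simp_all add: Psi_def)

lemma Psi_uminus: "Psi (-u) v = Psi u (v + pi)"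
  by (simp add: vec_eq_iff forall_3)

lemma geod_eq_Psi: "geod v s = Psi s v"
  by (simp add: geod_def Psi_def)

lemma H2_iff: "x \<in> H2 \<longleftrightarrow> (x$1)\<^sup>2 + (x$2)\<^sup>2 + 1 = (x$3)\<^sup>2 \<and> 0 < x$3"
  by (auto simp: H2_def lor_def power2_eq_square algebra_simps)

lemma H2_planar_norm: "x \<in> H2 \<Longrightarrow> (x$1)\<^sup>2 + (x$2)\<^sup>2 = (x$3)\<^sup>2 - 1"
  by (simp add: H2_iff algebra_simps)

lemma H2_nth3_ge_1:
  assumes "x \<in> H2"
  shows "1 \<le> x$3"
proof (rule power2_le_imp_le)
  show "1\<^sup>2 \<le> (x$3)\<^sup>2"
    unfolding power_one using H2_planar_norm[OF assms] zero_le_power2[of "x$1"] zero_le_power2[of "x$2"]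
    by linarith
qed (use assms in \<open>simp add: H2_iff\<close>)

lemma H2_hdist_NP_pos_iff: "x \<in> H2 \<Longrightarrow> 0 < hdist x NP \<longleftrightarrow> 1 < x$3"
  using H2_nth3_ge_1[of x] by (cases "x$3 = 1") (auto simp: hdist_NP)

lemma Psi_in_H2: "Psi u v \<in> H2"
proof -
  have "(sinh u * cos v)\<^sup>2 + (sinh u * sin v)\<^sup>2 = (sinh u)\<^sup>2 * ((cos v)\<^sup>2 + (sin v)\<^sup>2)"
    by (simp only: power_mult_distrib distrib_left)
  then show ?thesis
    by (simp add: H2_iff cosh_square_eq)
qed

lemma hdist_Psi_NP: "hdist (Psi u v) NP = \<bar>u\<bar>"
  using arcosh_cosh_real[of "\<bar>u\<bar>"] by (simp add: hdist_NP)

lemma lor_tangent_H2: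
  fixes \<gamma> :: "real \<Rightarrow> real^3"
  assumes "open U" "t \<in> U" "\<gamma> ` U \<subseteq> H2" and \<gamma>': "(\<gamma> has_vector_derivative v) (at t)"
  shows "lor (\<gamma> t) v = 0"
proof -
  note nth = has_vector_derivative_nth[OF \<gamma>']
  have "((\<lambda>s. lor (\<gamma> s) (\<gamma> s)) has_real_derivative
      2 * (\<gamma> t $ 1 * v $ 1 + \<gamma> t $ 2 * v $ 2 - \<gamma> t $ 3 * v $ 3)) (at t)"
    unfolding lor_def by (auto intro!: derivative_eq_intros nth simp: algebra_simps)
  then have "((\<lambda>s. lor (\<gamma> s) (\<gamma> s)) has_real_derivative 2 * lor (\<gamma> t) v) (at t)"
    by (simp add: lor_def)
  then have "((\<lambda>s. -1) has_real_derivative 2 * lor (\<gamma> t) v) (at t)"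
    by (rule has_field_derivative_transform_within_open[OF _ \<open>open U\<close> \<open>t \<in> U\<close>])
      (use assms in \<open>auto simp: H2_def\<close>)
  then show ?thesis
    using DERIV_const DERIV_unique by fastforce
qed

text \<open>The left-hand side is the derivative of the distance arcosh (x$3) to N along v: the distance
  to N is 1-Lipschitz.\<close>
lemma H2_tangent_nth3_le_speed:
  assumes x: "x \<in> H2" "1 < x$3" and v: "lor x v = 0"
  shows "\<bar>v$3\<bar> / sqrt ((x$3)\<^sup>2 - 1) \<le> sqrt (lor v v)"
proof -
  have pos: "0 < (x$3)\<^sup>2 - 1"
    using x(2) by (simp add: one_less_power)
  have "x$3 * v$3 = x$1 * v$1 + x$2 * v$2"
    using v by (simp add: lor_def)
  then have "(v$3)\<^sup>2 * (x$3)\<^sup>2 = (x$1 * v$1 + x$2 * v$2)\<^sup>2"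
    by (metis power_mult_distrib mult.commute)
  also have "\<dots> \<le> ((x$1)\<^sup>2 + (x$2)\<^sup>2) * ((v$1)\<^sup>2 + (v$2)\<^sup>2)"
    by (rule cauchy_schwarz_2)
  also have "\<dots> = ((x$3)\<^sup>2 - 1) * ((v$1)\<^sup>2 + (v$2)\<^sup>2)"
    by (simp only: H2_planar_norm[OF x(1)])
  finally have "(v$3)\<^sup>2 * (x$3)\<^sup>2 \<le> ((x$3)\<^sup>2 - 1) * ((v$1)\<^sup>2 + (v$2)\<^sup>2)" .
  moreover have "((x$3)\<^sup>2 - 1) * lor v v
      = ((x$3)\<^sup>2 - 1) * ((v$1)\<^sup>2 + (v$2)\<^sup>2) - (v$3)\<^sup>2 * (x$3)\<^sup>2 + (v$3)\<^sup>2"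
    by (simp add: lor_def power2_eq_square algebra_simps)
  ultimately have "(v$3)\<^sup>2 / ((x$3)\<^sup>2 - 1) \<le> lor v v"
    using pos by (simp add: pos_divide_le_eq mult.commute)
  moreover have "(\<bar>v$3\<bar> / sqrt ((x$3)\<^sup>2 - 1))\<^sup>2 = (v$3)\<^sup>2 / ((x$3)\<^sup>2 - 1)"
    using pos by (simp add: power_divide)
  ultimately show ?thesis
    by (metis real_le_rsqrt)
qed

lemma continuous_on_hdist_NP_comp:
  fixes \<gamma> :: "real \<Rightarrow> real^3"
  assumes "continuous_on S \<gamma>" "\<gamma> ` S \<subseteq> H2"
  shows "continuous_on S (\<lambda>t. hdist (\<gamma> t) NP)"
  unfolding hdist_NP
  by (intro continuous_on_arcosh' continuous_on_component assms(1)) (use assms(2) H2_nth3_ge_1 in blast)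

lemma hdist_NP_comp_has_real_derivative:
  fixes \<gamma> :: "real \<Rightarrow> real^3"
  assumes "(\<gamma> has_vector_derivative v) (at t)" "1 < \<gamma> t $ 3"
  shows "((\<lambda>s. hdist (\<gamma> s) NP) has_real_derivative v$3 / sqrt ((\<gamma> t $ 3)\<^sup>2 - 1)) (at t)"
  unfolding hdist_NP
  using DERIV_chain2[OF arcosh_real_has_field_derivative[OF assms(2)] has_vector_derivative_nth[OF assms(1)]]
  by simp

section \<open>Radial segments\<close>

lemma ray_has_vector_derivative:
  "((\<lambda>t. Psi (x0 + t * c) v) has_vector_derivative
     vector [c * cosh (x0 + t * c) * cos v, c * cosh (x0 + t * c) * sin v, c * sinh (x0 + t * c)]) (at t)"
  unfolding Psi_def by (intro vector3_has_vector_derivative) (auto intro!: derivative_eq_intros)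

lemma ray_speed:
  "lor (vector [c * cosh u * cos v, c * cosh u * sin v, c * sinh u])
       (vector [c * cosh u * cos v, c * cosh u * sin v, c * sinh u]) = c\<^sup>2"
proof -
  have "lor (vector [c * cosh u * cos v, c * cosh u * sin v, c * sinh u])
       (vector [c * cosh u * cos v, c * cosh u * sin v, c * sinh u])
      = (c * cosh u * cos v)\<^sup>2 + (c * cosh u * sin v)\<^sup>2 - (c * sinh u)\<^sup>2"
    by (simp add: lor_def power2_eq_square)
  also have "\<dots> = c\<^sup>2 * ((cosh u)\<^sup>2 * ((cos v)\<^sup>2 + (sin v)\<^sup>2) - (sinh u)\<^sup>2)"
    by algebra
  finally show ?thesis
    by (simp add: cosh_square_eq)
qed

lemma ray_curve_joining: "curve_joining (\<lambda>t. Psi (x0 + t * c) v) 0 1 (Psi x0 v) (Psi (x0 + c) v)"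
proof -
  have "(\<lambda>t. Psi (x0 + t * c) v) C1_differentiable_on {0..1}"
    unfolding C1_differentiable_on_def
    using ray_has_vector_derivative
    by (intro exI[of _ "\<lambda>t. vector [c * cosh (x0 + t * c) * cos v, c * cosh (x0 + t * c) * sin v, c * sinh (x0 + t * c)]"])
      (auto intro!: continuous_on_vector3 continuous_intros)
  then show ?thesis
    unfolding curve_joining_def using Psi_in_H2 by (auto intro: C1_differentiable_imp_piecewise)
qed

lemma energy_ray:
  "energy \<alpha> (\<lambda>t. Psi (x0 + t * c) v) 0 1
     = (\<integral>\<^sup>+u\<in>{min x0 (x0 + c)..max x0 (x0 + c)}. ennreal (\<bar>u\<bar> powr \<alpha>) \<partial>lborel)"
proof -
  have integrand: "hdist (Psi (x0 + t * c) v) NP powr \<alpha> *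
        sqrt (lor (vector_derivative (\<lambda>t. Psi (x0 + t * c) v) (at t)) (vector_derivative (\<lambda>t. Psi (x0 + t * c) v) (at t)))
      = \<bar>x0 + t * c\<bar> powr \<alpha> * \<bar>c\<bar>" for t
    by (simp add: vector_derivative_at[OF ray_has_vector_derivative] ray_speed hdist_Psi_NP)
  show ?thesis
  proof (cases "c = 0")
    case True
    then show ?thesis
      by (simp add: energy_def lor_def)
  next
    case False
    have ind: "indicator {min x0 (x0 + c)..max x0 (x0 + c)} (x0 + c * t) = (indicator {0..1} t :: ennreal)" for t
      using False by (cases "0 < c")
        (auto simp: min_def max_def mult_le_0_iff zero_le_mult_iff mult_le_cancel_left1 split: split_indicator)
    have "(\<integral>\<^sup>+u\<in>{min x0 (x0 + c)..max x0 (x0 + c)}. ennreal (\<bar>u\<bar> powr \<alpha>) \<partial>lborel)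
        = ennreal \<bar>c\<bar> * (\<integral>\<^sup>+t. ennreal (\<bar>x0 + c * t\<bar> powr \<alpha>)
            * indicator {min x0 (x0 + c)..max x0 (x0 + c)} (x0 + c * t) \<partial>lborel)"
      by (rule nn_integral_real_affine[OF _ False]) measurable
    also have "\<dots> = ennreal \<bar>c\<bar> * (\<integral>\<^sup>+t\<in>{0..1}. ennreal (\<bar>x0 + t * c\<bar> powr \<alpha>) \<partial>lborel)"
      unfolding ind by (simp add: mult.commute)
    also have "\<dots> = energy \<alpha> (\<lambda>t. Psi (x0 + t * c) v) 0 1"
      unfolding energy_def integrand
      by (subst nn_integral_cmult[symmetric]) (auto simp: ennreal_mult' mult_ac intro!: nn_integral_cong)
    finally show ?thesis ..
  qed
qed

definition powr_antideriv :: "real \<Rightarrow> real \<Rightarrow> real" where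
  "powr_antideriv \<alpha> u = (if \<alpha> = -1 then ln u else u powr (\<alpha> + 1) / (\<alpha> + 1))"

lemma powr_antideriv_has_real_derivative:
  assumes "0 < u"
  shows "(powr_antideriv \<alpha> has_real_derivative u powr \<alpha>) (at u)"
proof (cases "\<alpha> = -1")
  case True
  then show ?thesis
    unfolding powr_antideriv_def using assms by (auto intro!: derivative_eq_intros simp: powr_minus_divide)
next
  case False
  then have "((\<lambda>u. u powr (\<alpha> + 1) / (\<alpha> + 1)) has_real_derivative u powr \<alpha>) (at u)"
    using assms by (auto intro!: derivative_eq_intros)
  then show ?thesis
    unfolding powr_antideriv_def using False by simp
qed

lemma powr_antideriv_pos_exponent: "0 < \<alpha> \<Longrightarrow> powr_antideriv \<alpha> u = u powr (\<alpha> + 1) / (\<alpha> + 1)"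
  by (simp add: powr_antideriv_def)

lemma powr_antideriv_0 [simp]: "powr_antideriv \<alpha> 0 = 0"
  by (simp add: powr_antideriv_def)

lemma nn_integral_powr_antideriv:
  assumes "0 < lo" "lo \<le> hi"
  shows "(\<integral>\<^sup>+u\<in>{lo..hi}. ennreal (\<bar>u\<bar> powr \<alpha>) \<partial>lborel) = ennreal (powr_antideriv \<alpha> hi - powr_antideriv \<alpha> lo)"
proof -
  have "((\<lambda>u. \<bar>u\<bar> powr \<alpha>) has_integral powr_antideriv \<alpha> hi - powr_antideriv \<alpha> lo) {lo..hi}"
  proof (rule fundamental_theorem_of_calculus[OF assms(2)])
    fix u assume "u \<in> {lo..hi}"
    then have "0 < u"
      using assms by auto
    then show "(powr_antideriv \<alpha> has_vector_derivative \<bar>u\<bar> powr \<alpha>) (at u within {lo..hi})"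
      using powr_antideriv_has_real_derivative[of u \<alpha>]
      by (simp add: has_real_derivative_iff_has_vector_derivative[symmetric] has_field_derivative_at_within)
  qed
  then show ?thesis
    by (intro nn_integral_has_integral_lebesgue') auto
qed

lemma abs_powr_has_integral_antideriv:
  assumes "0 < \<alpha>" "0 \<le> u"
  shows "((\<lambda>x. \<bar>x\<bar> powr \<alpha>) has_integral powr_antideriv \<alpha> u) {0..u}"
proof -
  have "((\<lambda>x. \<bar>x\<bar> powr \<alpha>) has_integral powr_antideriv \<alpha> u - powr_antideriv \<alpha> 0) {0..u}"
  proof (rule fundamental_theorem_of_calculus_interior_strong[of "{}"])
    show "continuous_on {0..u} (powr_antideriv \<alpha>)"
      unfolding powr_antideriv_pos_exponent[OF assms(1), abs_def] using assms(1)
      by (intro continuous_intros continuous_on_powr') auto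
    fix x
    assume "x \<in> {0<..<u} - {}"
    then show "(powr_antideriv \<alpha> has_vector_derivative \<bar>x\<bar> powr \<alpha>) (at x)"
      using powr_antideriv_has_real_derivative[of x \<alpha>]
      by (simp add: has_real_derivative_iff_has_vector_derivative)
  qed (use assms in auto)
  then show ?thesis
    by simp
qed

lemma nn_integral_abs_powr_symmetric:
  assumes "0 < \<alpha>" "0 \<le> u1" "0 \<le> u2"
  shows "(\<integral>\<^sup>+u\<in>{-u2..u1}. ennreal (\<bar>u\<bar> powr \<alpha>) \<partial>lborel)
    = ennreal (powr_antideriv \<alpha> u1 + powr_antideriv \<alpha> u2)"
proof -
  have "((\<lambda>x. \<bar>x\<bar> powr \<alpha>) has_integral powr_antideriv \<alpha> u2) {-u2..0}"
    using has_integral_reflect_real[where f = "\<lambda>x. \<bar>x\<bar> powr \<alpha>" and a = 0 and b = u2]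
      abs_powr_has_integral_antideriv[OF assms(1,3)]
    by simp
  then have "((\<lambda>x. \<bar>x\<bar> powr \<alpha>) has_integral powr_antideriv \<alpha> u2 + powr_antideriv \<alpha> u1) {-u2..u1}"
    using abs_powr_has_integral_antideriv[OF assms(1,2)] assms
    by (intro has_integral_combine[where c = 0]) auto
  then show ?thesis
    by (intro nn_integral_has_integral_lebesgue') (auto simp: add.commute)
qed

section \<open>Lower bound by the distance to N\<close>

lemma energy_mono:
  assumes "a \<le> c" "e \<le> b"
  shows "energy \<alpha> \<gamma> c e \<le> energy \<alpha> \<gamma> a b"
  unfolding energy_def using assms by (intro nn_integral_mono) (auto split: split_indicator)

lemma abs_diff_antideriv_dist_le_energy:
  fixes \<gamma> :: "real \<Rightarrow> real^3"
  assumes "a \<le> b" and pw: "\<gamma> piecewise_C1_differentiable_on {a..b}" and img: "\<gamma> ` {a..b} \<subseteq> H2"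
    and away: "\<And>t. t \<in> {a..b} \<Longrightarrow> 0 < hdist (\<gamma> t) NP"
  shows "ennreal \<bar>powr_antideriv \<alpha> (hdist (\<gamma> b) NP) - powr_antideriv \<alpha> (hdist (\<gamma> a) NP)\<bar> \<le> energy \<alpha> \<gamma> a b"
proof -
  obtain S where "finite S" and cont: "continuous_on {a..b} \<gamma>"
    and \<gamma>': "\<And>t. t \<in> {a..b} - S \<Longrightarrow> (\<gamma> has_vector_derivative vector_derivative \<gamma> (at t)) (at t)"
    using piecewise_C1_differentiable_onE[OF pw] by blast
  define D where "D t = vector_derivative \<gamma> (at t)" for t
  define h' where "h' t = hdist (\<gamma> t) NP powr \<alpha> * (D t $ 3 / sqrt ((\<gamma> t $ 3)\<^sup>2 - 1))" for t
  have z: "1 < \<gamma> t $ 3" if "t \<in> {a..b}" for t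
  proof -
    have "\<gamma> t \<in> H2"
      using img that by auto
    then show ?thesis
      using H2_hdist_NP_pos_iff away[OF that] by simp
  qed
  show ?thesis
    unfolding energy_def
  proof (rule abs_diff_le_nn_integral_of_deriv_bound[OF \<open>a \<le> b\<close> \<open>finite S\<close>,
        where h = "\<lambda>t. powr_antideriv \<alpha> (hdist (\<gamma> t) NP)" and h' = h'])
    have dist_cont: "continuous_on {a..b} (\<lambda>t. hdist (\<gamma> t) NP)"
      by (rule continuous_on_hdist_NP_comp[OF cont img])
    have antideriv_cont: "continuous_on {0<..} (powr_antideriv \<alpha>)"
      by (rule continuous_at_imp_continuous_on) (auto intro: DERIV_isCont powr_antideriv_has_real_derivative)
    show "continuous_on {a..b} (\<lambda>t. powr_antideriv \<alpha> (hdist (\<gamma> t) NP))"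
      by (rule continuous_on_compose2[OF antideriv_cont dist_cont]) (use away in auto)
  next
    fix t
    assume t: "t \<in> {a<..<b} - S"
    then have tab: "t \<in> {a..b}" "t \<in> {a..b} - S"
      by auto
    note \<gamma>'_t = \<gamma>'[OF tab(2), folded D_def]
    from DERIV_chain2[OF powr_antideriv_has_real_derivative[OF away[OF tab(1)]]
        hdist_NP_comp_has_real_derivative[OF \<gamma>'_t z[OF tab(1)]]]
    show "((\<lambda>s. powr_antideriv \<alpha> (hdist (\<gamma> s) NP)) has_real_derivative h' t) (at t)"
      by (simp add: h'_def)
    have "lor (\<gamma> t) (D t) = 0"
      by (rule lor_tangent_H2[of "{a<..<b}"]) (use t img \<gamma>'_t in auto)
    then have "\<bar>D t $ 3\<bar> / sqrt ((\<gamma> t $ 3)\<^sup>2 - 1) \<le> sqrt (lor (D t) (D t))"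
      using img tab(1) by (intro H2_tangent_nth3_le_speed z) auto
    then have "hdist (\<gamma> t) NP powr \<alpha> * (\<bar>D t $ 3\<bar> / sqrt ((\<gamma> t $ 3)\<^sup>2 - 1))
        \<le> hdist (\<gamma> t) NP powr \<alpha> * sqrt (lor (D t) (D t))"
      by (rule mult_left_mono) simp
    moreover have "0 \<le> (\<gamma> t $ 3)\<^sup>2 - 1"
      using z[OF tab(1)] by (simp add: one_le_power)
    ultimately show "\<bar>h' t\<bar> \<le> hdist (\<gamma> t) NP powr \<alpha> * sqrt (lor (vector_derivative \<gamma> (at t)) (vector_derivative \<gamma> (at t)))"
      unfolding h'_def D_def[symmetric] by (simp add: abs_mult)
  qed
qed

text \<open>For \<alpha> \<le> -1 the antiderivative blows up at 0, so it is applied only to an arc of the curve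
  staying at distance \<ge> \<epsilon> > 0 from N.\<close>
lemma antideriv_gap_le_energy:
  assumes "curve_joining \<gamma> a b p q" and "0 < \<epsilon>"
    and "min (hdist p NP) (hdist q NP) \<le> \<epsilon>" "\<epsilon> \<le> max (hdist p NP) (hdist q NP)"
  shows "ennreal (powr_antideriv \<alpha> (max (hdist p NP) (hdist q NP)) - powr_antideriv \<alpha> \<epsilon>) \<le> energy \<alpha> \<gamma> a b"
proof -
  from assms(1) have "a \<le> b" and pw: "\<gamma> piecewise_C1_differentiable_on {a..b}" and img: "\<gamma> ` {a..b} \<subseteq> H2"
    and "\<gamma> a = p" "\<gamma> b = q"
    by (auto simp: curve_joining_def)
  define d where "d t = hdist (\<gamma> t) NP" for t
  have "continuous_on {a..b} \<gamma>"
    using pw by (simp add: piecewise_C1_differentiable_on_def)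
  then have "continuous_on {a..b} d"
    unfolding d_def using img by (rule continuous_on_hdist_NP_comp)
  then obtain c e where ce: "a \<le> c" "c \<le> e" "e \<le> b" "\<And>t. t \<in> {c..e} \<Longrightarrow> \<epsilon> \<le> d t"
    and ends: "min (d c) (d e) = \<epsilon>" "max (d c) (d e) = max (hdist p NP) (hdist q NP)"
    using subinterval_above_level[of a b d \<epsilon>] \<open>a \<le> b\<close> assms(3,4) \<open>\<gamma> a = p\<close> \<open>\<gamma> b = q\<close>
    by (auto simp: d_def)
  have "ennreal (powr_antideriv \<alpha> (max (hdist p NP) (hdist q NP)) - powr_antideriv \<alpha> \<epsilon>)
      \<le> ennreal \<bar>powr_antideriv \<alpha> (d e) - powr_antideriv \<alpha> (d c)\<bar>"
    using ends by (intro ennreal_leI) (auto simp: min_def max_def split: if_splits)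
  also have "\<dots> \<le> energy \<alpha> \<gamma> c e"
    unfolding d_def
  proof (rule abs_diff_antideriv_dist_le_energy)
    show "\<gamma> piecewise_C1_differentiable_on {c..e}"
      using pw ce by (auto elim: piecewise_C1_differentiable_on_subset)
    show "\<gamma> ` {c..e} \<subseteq> H2"
      using img ce by auto
    show "0 < hdist (\<gamma> t) NP" if "t \<in> {c..e}" for t
      using ce(4)[OF that] \<open>0 < \<epsilon>\<close> by (simp add: d_def)
  qed fact
  also have "\<dots> \<le> energy \<alpha> \<gamma> a b"
    using ce by (intro energy_mono)
  finally show ?thesis .
qed

lemma energy_ge_nn_integral_dist:
  assumes "curve_joining \<gamma> a b p q"
  shows "(\<integral>\<^sup>+u\<in>{min (hdist p NP) (hdist q NP)..max (hdist p NP) (hdist q NP)}. ennreal (\<bar>u\<bar> powr \<alpha>) \<partial>lborel)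
    \<le> energy \<alpha> \<gamma> a b"
proof -
  define lo where "lo = min (hdist p NP) (hdist q NP)"
  define hi where "hi = max (hdist p NP) (hdist q NP)"
  have "p \<in> H2" "q \<in> H2"
    using assms by (auto simp: curve_joining_def)
  then have "0 \<le> lo"
    using H2_nth3_ge_1 by (simp add: lo_def hdist_NP)
  show ?thesis
    unfolding lo_def[symmetric] hi_def[symmetric]
  proof (cases "lo = hi")
    case False
    then have "lo < hi"
      by (simp add: lo_def hi_def)
    then show "(\<integral>\<^sup>+u\<in>{lo..hi}. ennreal (\<bar>u\<bar> powr \<alpha>) \<partial>lborel) \<le> energy \<alpha> \<gamma> a b"
    proof (rule nn_integral_Icc_le_of_subintervals[rotated])
      fix \<epsilon>
      assume "lo < \<epsilon>" "\<epsilon> < hi"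
      then have "(\<integral>\<^sup>+u\<in>{\<epsilon>..hi}. ennreal (\<bar>u\<bar> powr \<alpha>) \<partial>lborel) = ennreal (powr_antideriv \<alpha> hi - powr_antideriv \<alpha> \<epsilon>)"
        using \<open>0 \<le> lo\<close> by (simp add: nn_integral_powr_antideriv)
      also have "\<dots> \<le> energy \<alpha> \<gamma> a b"
        unfolding hi_def using assms \<open>0 \<le> lo\<close> \<open>lo < \<epsilon>\<close> \<open>\<epsilon> < hi\<close>
        by (intro antideriv_gap_le_energy) (auto simp: lo_def hi_def)
      finally show "(\<integral>\<^sup>+u\<in>{\<epsilon>..hi}. ennreal (\<bar>u\<bar> powr \<alpha>) \<partial>lborel) \<le> energy \<alpha> \<gamma> a b" .
    qed measurable
  qed simp
qed

section \<open>The calibration\<close>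

lemma arcosh_le_sqrt:
  assumes "1 \<le> z"
  shows "arcosh z \<le> sqrt (z\<^sup>2 - 1)"
  using real_le_x_sinh[of "arcosh z"] assms by (simp add: sinh_def exp_minus sinh_arcosh_real[symmetric])

text \<open>In polar coordinates around N the calibration is F(u) cos (v - v0), F = powr_antideriv \<alpha>
  (lemma calibration_Psi). At N, where x$3 = 1, the denominators below vanish and x / 0 = 0
  gives calibration and calibration_deriv the value 0, which is correct there when 0 < \<alpha>.\<close>

definition calibration_profile :: "real \<Rightarrow> real \<Rightarrow> real" where
  "calibration_profile \<alpha> z = powr_antideriv \<alpha> (arcosh z) / sqrt (z\<^sup>2 - 1)"

definition calibration :: "real \<Rightarrow> real \<Rightarrow> real^3 \<Rightarrow> real" where
  "calibration \<alpha> v0 x = calibration_profile \<alpha> (x$3) * (x$1 * cos v0 + x$2 * sin v0)"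

definition calibration_deriv :: "real \<Rightarrow> real \<Rightarrow> real^3 \<Rightarrow> real^3 \<Rightarrow> real" where
  "calibration_deriv \<alpha> v0 x v =
     (arcosh (x$3) powr \<alpha> - x$3 * calibration_profile \<alpha> (x$3)) / ((x$3)\<^sup>2 - 1) * v$3 * (x$1 * cos v0 + x$2 * sin v0)
     + calibration_profile \<alpha> (x$3) * (v$1 * cos v0 + v$2 * sin v0)"

lemma calibration_profile_has_real_derivative:
  assumes z: "1 < z"
  shows "(calibration_profile \<alpha> has_real_derivative
    (arcosh z powr \<alpha> - z * calibration_profile \<alpha> z) / (z\<^sup>2 - 1)) (at z)"
proof -
  define r where "r = sqrt (z\<^sup>2 - 1)"
  have "0 < z\<^sup>2 - 1"
    using z by (simp add: one_less_power)
  then have "0 < r" "r\<^sup>2 = z\<^sup>2 - 1"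
    by (simp_all add: r_def)
  have "0 < arcosh z"
    using z by simp
  have F: "((\<lambda>z. powr_antideriv \<alpha> (arcosh z)) has_real_derivative arcosh z powr \<alpha> * (1 / r)) (at z)"
    unfolding r_def
    by (rule DERIV_chain2[OF powr_antideriv_has_real_derivative[OF \<open>0 < arcosh z\<close>] arcosh_real_has_field_derivative[OF z]])
  have "((\<lambda>z. sqrt (z\<^sup>2 - 1)) has_real_derivative z / r) (at z)"
    using \<open>0 < z\<^sup>2 - 1\<close> unfolding r_def by (auto intro!: derivative_eq_intros simp: field_simps)
  from DERIV_quotient[OF F this] \<open>0 < r\<close>
  have "(calibration_profile \<alpha> has_real_derivative
      (arcosh z powr \<alpha> * (1 / r) * r - z / r * powr_antideriv \<alpha> (arcosh z)) / r\<^sup>2) (at z)"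
    unfolding calibration_profile_def r_def[symmetric] by (simp add: power2_eq_square)
  moreover have "(arcosh z powr \<alpha> * (1 / r) * r - z / r * powr_antideriv \<alpha> (arcosh z)) / r\<^sup>2
      = (arcosh z powr \<alpha> - z * calibration_profile \<alpha> z) / (z\<^sup>2 - 1)"
    using \<open>0 < r\<close> unfolding \<open>r\<^sup>2 = z\<^sup>2 - 1\<close>[symmetric] calibration_profile_def r_def[symmetric]
    by (simp add: field_simps)
  ultimately show ?thesis
    by simp
qed

lemma calibration_profile_nonneg: "0 < \<alpha> \<Longrightarrow> 1 \<le> z \<Longrightarrow> 0 \<le> calibration_profile \<alpha> z"
  by (simp add: calibration_profile_def powr_antideriv_pos_exponent)

lemma calibration_profile_le:
  assumes "0 < \<alpha>" "1 < z"
  shows "calibration_profile \<alpha> z \<le> arcosh z powr \<alpha>"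
proof -
  define d where "d = arcosh z"
  have "0 < d" "0 < sqrt (z\<^sup>2 - 1)"
    using assms by (simp_all add: d_def one_less_power)
  have "powr_antideriv \<alpha> d = d powr \<alpha> * d / (\<alpha> + 1)"
    using assms \<open>0 < d\<close> by (simp add: powr_antideriv_pos_exponent powr_add)
  also have "\<dots> \<le> d powr \<alpha> * d"
    using assms \<open>0 < d\<close> by (simp add: divide_le_eq)
  also have "\<dots> \<le> d powr \<alpha> * sqrt (z\<^sup>2 - 1)"
    using arcosh_le_sqrt[of z] assms by (intro mult_left_mono) (auto simp: d_def)
  finally show ?thesis
    using \<open>0 < sqrt (z\<^sup>2 - 1)\<close> unfolding calibration_profile_def d_def[symmetric]
    by (simp add: divide_le_eq)
qed

lemma calibration_Psi:
  assumes "0 \<le> u"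
  shows "calibration \<alpha> v0 (Psi u v) = powr_antideriv \<alpha> u * cos (v - v0)"
proof -
  have "calibration_profile \<alpha> (cosh u) * sinh u = powr_antideriv \<alpha> u"
  proof (cases "u = 0")
    case False
    then have "0 < sinh u"
      using assms by simp
    then show ?thesis
      using assms by (simp add: calibration_profile_def cosh_square_eq arcosh_cosh_real)
  qed simp
  moreover have "sinh u * cos v * cos v0 + sinh u * sin v * sin v0 = sinh u * cos (v - v0)"
    by (simp add: cos_diff algebra_simps)
  ultimately show ?thesis
    by (simp add: calibration_def mult.assoc)
qed

lemma abs_calibration_le:
  assumes "0 < \<alpha>" "x \<in> H2"
  shows "\<bar>calibration \<alpha> v0 x\<bar> \<le> powr_antideriv \<alpha> (hdist x NP)"
proof -
  have "1 \<le> x$3"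
    using H2_nth3_ge_1[OF assms(2)] .
  have "(x$1 * cos v0 + x$2 * sin v0)\<^sup>2 \<le> ((x$1)\<^sup>2 + (x$2)\<^sup>2) * ((cos v0)\<^sup>2 + (sin v0)\<^sup>2)"
    by (rule cauchy_schwarz_2)
  then have "\<bar>x$1 * cos v0 + x$2 * sin v0\<bar> \<le> sqrt ((x$3)\<^sup>2 - 1)"
    using H2_planar_norm[OF assms(2)] by (simp add: real_le_rsqrt)
  then have "\<bar>calibration \<alpha> v0 x\<bar> \<le> calibration_profile \<alpha> (x$3) * sqrt ((x$3)\<^sup>2 - 1)"
    using calibration_profile_nonneg[OF assms(1) \<open>1 \<le> x$3\<close>]
    by (simp add: calibration_def abs_mult mult_left_mono)
  also have "\<dots> = powr_antideriv \<alpha> (hdist x NP)"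
  proof (cases "x$3 = 1")
    case False
    then have "1 < (x$3)\<^sup>2"
      using \<open>1 \<le> x$3\<close> by (simp add: one_less_power)
    then show ?thesis
      by (simp add: calibration_profile_def hdist_NP)
  qed (simp add: calibration_profile_def hdist_NP)
  finally show ?thesis .
qed

lemma abs_calibration_le_planar:
  assumes "0 < \<alpha>" "x \<in> H2"
  shows "\<bar>calibration \<alpha> v0 x\<bar> \<le> sqrt ((x$1)\<^sup>2 + (x$2)\<^sup>2) powr (\<alpha> + 1) / (\<alpha> + 1)"
proof -
  have "hdist x NP \<le> sqrt ((x$1)\<^sup>2 + (x$2)\<^sup>2)"
    unfolding hdist_NP H2_planar_norm[OF assms(2)] by (rule arcosh_le_sqrt[OF H2_nth3_ge_1[OF assms(2)]])
  then have "powr_antideriv \<alpha> (hdist x NP) \<le> sqrt ((x$1)\<^sup>2 + (x$2)\<^sup>2) powr (\<alpha> + 1) / (\<alpha> + 1)"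
    using assms H2_nth3_ge_1[OF assms(2)]
    by (auto simp: powr_antideriv_pos_exponent hdist_NP intro!: divide_right_mono powr_mono2)
  with abs_calibration_le[OF assms, of v0] show ?thesis
    by linarith
qed

lemma continuous_on_calibration:
  assumes "0 < \<alpha>"
  shows "continuous_on H2 (calibration \<alpha> v0)"
  unfolding continuous_on_eq_continuous_within
proof
  fix x
  assume "x \<in> H2"
  show "continuous (at x within H2) (calibration \<alpha> v0)"
  proof (cases "1 < x$3")
    case True
    have "isCont (calibration_profile \<alpha>) (x$3)"
      using calibration_profile_has_real_derivative[OF True] by (rule DERIV_isCont)
    then have "isCont (\<lambda>y. calibration_profile \<alpha> (y$3)) x"
      by (rule isCont_o2[where f = "\<lambda>y. y$3", rotated]) (intro continuous_intros)
    then have "isCont (calibration \<alpha> v0) x"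
      unfolding calibration_def by (intro continuous_intros)
    then show ?thesis
      by (rule continuous_at_imp_continuous_within)
  next
    case False
    then have "x$3 = 1" "(x$1)\<^sup>2 + (x$2)\<^sup>2 = 0"
      using H2_nth3_ge_1[OF \<open>x \<in> H2\<close>] H2_planar_norm[OF \<open>x \<in> H2\<close>] by auto
    then have "calibration \<alpha> v0 x = 0"
      by (simp add: calibration_def calibration_profile_def)
    have "((\<lambda>y. sqrt ((y$1)\<^sup>2 + (y$2)\<^sup>2) powr (\<alpha> + 1) / (\<alpha> + 1))
        \<longlongrightarrow> sqrt ((x$1)\<^sup>2 + (x$2)\<^sup>2) powr (\<alpha> + 1) / (\<alpha> + 1)) (at x within H2)"
      using assms by (intro tendsto_intros tendsto_powr') auto
    then have "((\<lambda>y. sqrt ((y$1)\<^sup>2 + (y$2)\<^sup>2) powr (\<alpha> + 1) / (\<alpha> + 1)) \<longlongrightarrow> 0) (at x within H2)"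
      using \<open>(x$1)\<^sup>2 + (x$2)\<^sup>2 = 0\<close> by simp
    moreover have "eventually (\<lambda>y. norm (calibration \<alpha> v0 y) \<le> sqrt ((y$1)\<^sup>2 + (y$2)\<^sup>2) powr (\<alpha> + 1) / (\<alpha> + 1))
        (at x within H2)"
      using abs_calibration_le_planar[OF assms] by (auto simp: eventually_at_filter)
    ultimately show ?thesis
      unfolding continuous_within \<open>calibration \<alpha> v0 x = 0\<close> by (rule Lim_null_comparison[rotated])
  qed
qed

text \<open>With B = calibration_profile \<alpha> (x$3) and D = arcosh (x$3) powr \<alpha>, the left-hand side
  is calibration_deriv \<alpha> v0 x v: this is the pointwise calibration inequality.\<close>
lemma H2_tangent_form_bound:
  assumes x: "x \<in> H2" "1 < x$3" and v: "lor x v = 0" and cs: "c\<^sup>2 + s\<^sup>2 = 1" and B: "0 \<le> B" "B \<le> D"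
  shows "\<bar>(D - x$3 * B) / ((x$3)\<^sup>2 - 1) * v$3 * (x$1 * c + x$2 * s) + B * (v$1 * c + v$2 * s)\<bar>
    \<le> D * sqrt (lor v v)"
proof -
  define R where "R = (x$3)\<^sup>2 - 1"
  define W where "W = (v$1)\<^sup>2 + (v$2)\<^sup>2"
  define l where "l = (D - x$3 * B) * v$3 / R"
  define X where "X = l * x$1 + B * v$1"
  define Y where "Y = l * x$2 + B * v$2"
  have "0 < R"
    using x(2) by (simp add: R_def one_less_power)
  have planar: "(x$1)\<^sup>2 + (x$2)\<^sup>2 = R"
    using H2_planar_norm[OF x(1)] by (simp add: R_def)
  have tangent: "x$1 * v$1 + x$2 * v$2 = x$3 * v$3"
    using v by (simp add: lor_def)
  have "(D - x$3 * B) / ((x$3)\<^sup>2 - 1) * v$3 = l"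
    by (simp add: l_def R_def)
  then have lhs: "(D - x$3 * B) / ((x$3)\<^sup>2 - 1) * v$3 * (x$1 * c + x$2 * s) + B * (v$1 * c + v$2 * s)
      = c * X + s * Y"
    unfolding X_def Y_def by (simp add: algebra_simps)
  have "X\<^sup>2 + Y\<^sup>2 = l\<^sup>2 * ((x$1)\<^sup>2 + (x$2)\<^sup>2) + 2 * l * B * (x$1 * v$1 + x$2 * v$2) + B\<^sup>2 * W"
    by (simp add: X_def Y_def W_def power2_eq_square algebra_simps)
  also have "\<dots> = (v$3)\<^sup>2 * (D\<^sup>2 - (x$3)\<^sup>2 * B\<^sup>2) / R + B\<^sup>2 * W"
    unfolding planar tangent using \<open>0 < R\<close> by (simp add: l_def power2_eq_square field_simps)
  finally have XY: "X\<^sup>2 + Y\<^sup>2 = (v$3)\<^sup>2 * (D\<^sup>2 - (x$3)\<^sup>2 * B\<^sup>2) / R + B\<^sup>2 * W" .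
  have "(x$3)\<^sup>2 * (v$3)\<^sup>2 \<le> R * W"
    using cauchy_schwarz_2[of "x$1" "v$1" "x$2" "v$2"]
    unfolding planar tangent W_def by (simp add: power_mult_distrib)
  then have "(x$3)\<^sup>2 * (v$3)\<^sup>2 / R \<le> W"
    using \<open>0 < R\<close> by (simp add: divide_le_eq mult.commute)
  moreover have "0 \<le> D\<^sup>2 - B\<^sup>2"
    using B by (simp add: power_mono)
  moreover have "D\<^sup>2 * (W - (v$3)\<^sup>2) - (X\<^sup>2 + Y\<^sup>2) = (D\<^sup>2 - B\<^sup>2) * (W - (x$3)\<^sup>2 * (v$3)\<^sup>2 / R)"
    using \<open>0 < R\<close> unfolding XY by (simp add: R_def field_simps)
  ultimately have "X\<^sup>2 + Y\<^sup>2 \<le> D\<^sup>2 * (W - (v$3)\<^sup>2)"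
    by (smt (verit) mult_nonneg_nonneg)
  moreover have "(c * X + s * Y)\<^sup>2 \<le> X\<^sup>2 + Y\<^sup>2"
    using cauchy_schwarz_2[of c X s Y] cs by simp
  ultimately have "\<bar>c * X + s * Y\<bar> \<le> sqrt (D\<^sup>2 * (W - (v$3)\<^sup>2))"
    by (simp add: real_le_rsqrt)
  also have "\<dots> = D * sqrt (lor v v)"
    using B by (simp add: real_sqrt_mult W_def lor_def power2_eq_square)
  finally show ?thesis
    unfolding lhs .
qed

lemma abs_calibration_deriv_le:
  assumes "0 < \<alpha>" "x \<in> H2" "lor x v = 0"
  shows "\<bar>calibration_deriv \<alpha> v0 x v\<bar> \<le> hdist x NP powr \<alpha> * sqrt (lor v v)"
proof (cases "1 < x$3")
  case True
  then show ?thesis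
    unfolding calibration_deriv_def hdist_NP
    using assms calibration_profile_nonneg[of \<alpha> "x$3"] calibration_profile_le[OF assms(1) True]
    by (intro H2_tangent_form_bound) auto
next
  case False
  then have "x$3 = 1"
    using H2_nth3_ge_1[OF assms(2)] by simp
  then show ?thesis
    by (simp add: calibration_deriv_def calibration_profile_def hdist_NP)
qed

lemma calibration_comp_has_derivative_off_NP:
  fixes \<gamma> :: "real \<Rightarrow> real^3"
  assumes \<gamma>': "(\<gamma> has_vector_derivative v) (at t)" and "1 < \<gamma> t $ 3"
  shows "((\<lambda>s. calibration \<alpha> v0 (\<gamma> s)) has_real_derivative calibration_deriv \<alpha> v0 (\<gamma> t) v) (at t)"
proof -
  note nth = has_vector_derivative_nth[OF \<gamma>']
  have "((\<lambda>s. calibration_profile \<alpha> (\<gamma> s $ 3)) has_real_derivative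
      (arcosh (\<gamma> t $ 3) powr \<alpha> - \<gamma> t $ 3 * calibration_profile \<alpha> (\<gamma> t $ 3)) / ((\<gamma> t $ 3)\<^sup>2 - 1) * v$3) (at t)"
    by (rule DERIV_chain2[OF calibration_profile_has_real_derivative[OF \<open>1 < \<gamma> t $ 3\<close>] nth])
  moreover have "((\<lambda>s. \<gamma> s $ 1 * cos v0 + \<gamma> s $ 2 * sin v0) has_real_derivative v$1 * cos v0 + v$2 * sin v0) (at t)"
    by (intro DERIV_add DERIV_cmult_right nth)
  ultimately show ?thesis
    unfolding calibration_def calibration_deriv_def by (rule DERIV_mult[THEN DERIV_cong]) (simp add: algebra_simps)
qed

text \<open>At N the calibration vanishes to order \<alpha> + 1 > 1 in the planar coordinates x$1, x$2,
  which vanish to first order along the curve.\<close>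
lemma calibration_comp_has_derivative_at_NP:
  fixes \<gamma> :: "real \<Rightarrow> real^3"
  assumes "0 < \<alpha>" and "open U" "t \<in> U" "\<gamma> ` U \<subseteq> H2"
    and \<gamma>': "(\<gamma> has_vector_derivative v) (at t)" and "\<gamma> t $ 3 = 1"
  shows "((\<lambda>s. calibration \<alpha> v0 (\<gamma> s)) has_real_derivative 0) (at t)"
proof -
  define p where "p s = \<gamma> s $ 1" for s
  define q where "q s = \<gamma> s $ 2" for s
  have "\<gamma> t \<in> H2"
    using assms by auto
  then have "(p t)\<^sup>2 + (q t)\<^sup>2 = 0"
    using H2_planar_norm \<open>\<gamma> t $ 3 = 1\<close> by (simp add: p_def q_def)
  then have "p t = 0" "q t = 0"
    by (auto simp: add_nonneg_eq_0_iff)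
  define Q where "Q s = sqrt (((p s - p t) / (s - t))\<^sup>2 + ((q s - q t) / (s - t))\<^sup>2)" for s
  define R where "R s = Q s powr (\<alpha> + 1) * \<bar>s - t\<bar> powr \<alpha> / (\<alpha> + 1)" for s
  show ?thesis
  proof (rule has_real_derivative_zero_of_bound[where R = R])
    show "calibration \<alpha> v0 (\<gamma> t) = 0"
      using \<open>\<gamma> t $ 3 = 1\<close> by (simp add: calibration_def calibration_profile_def)
    have "(Q \<longlongrightarrow> sqrt ((v$1)\<^sup>2 + (v$2)\<^sup>2)) (at t)"
      using has_vector_derivative_nth[OF \<gamma>', of 1] has_vector_derivative_nth[OF \<gamma>', of 2]
      unfolding Q_def p_def q_def has_field_derivative_iff by (intro tendsto_intros)
    moreover have "((\<lambda>s. \<bar>s - t\<bar>) \<longlongrightarrow> 0) (at t)"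
      by (intro tendsto_rabs_zero LIM_zero tendsto_ident_at)
    moreover have "0 \<le> Q s" for s
      by (simp add: Q_def)
    ultimately have "(R \<longlongrightarrow> sqrt ((v$1)\<^sup>2 + (v$2)\<^sup>2) powr (\<alpha> + 1) * 0 powr \<alpha> / (\<alpha> + 1)) (at t)"
      unfolding R_def using \<open>0 < \<alpha>\<close> by (intro tendsto_intros tendsto_powr') auto
    then show "(R \<longlongrightarrow> 0) (at t)"
      by simp
    show "eventually (\<lambda>s. \<bar>calibration \<alpha> v0 (\<gamma> s)\<bar> \<le> R s * \<bar>s - t\<bar>) (at t)"
      using eventually_at_in_open[OF \<open>open U\<close> \<open>t \<in> U\<close>]
    proof eventually_elim
      case (elim s)
      then have "\<gamma> s \<in> H2" "0 < \<bar>s - t\<bar>"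
        using assms by auto
      have "sqrt ((p s)\<^sup>2 + (q s)\<^sup>2) = Q s * \<bar>s - t\<bar>"
        using \<open>0 < \<bar>s - t\<bar>\<close> unfolding Q_def \<open>p t = 0\<close> \<open>q t = 0\<close>
        by (simp add: power_divide add_divide_distrib[symmetric] real_sqrt_divide)
      then have "sqrt ((p s)\<^sup>2 + (q s)\<^sup>2) powr (\<alpha> + 1) / (\<alpha> + 1) = R s * \<bar>s - t\<bar>"
        using \<open>0 < \<bar>s - t\<bar>\<close> by (simp add: R_def Q_def powr_mult powr_add)
      then show ?case
        using abs_calibration_le_planar[OF \<open>0 < \<alpha>\<close> \<open>\<gamma> s \<in> H2\<close>, of v0] by (simp add: p_def q_def)
    qed
  qed
qed

lemma calibration_comp_has_real_derivative:
  fixes \<gamma> :: "real \<Rightarrow> real^3"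
  assumes "0 < \<alpha>" "open U" "t \<in> U" "\<gamma> ` U \<subseteq> H2" and \<gamma>': "(\<gamma> has_vector_derivative v) (at t)"
  shows "((\<lambda>s. calibration \<alpha> v0 (\<gamma> s)) has_real_derivative calibration_deriv \<alpha> v0 (\<gamma> t) v) (at t)"
proof (cases "1 < \<gamma> t $ 3")
  case True
  then show ?thesis
    by (rule calibration_comp_has_derivative_off_NP[OF \<gamma>'])
next
  case False
  have "\<gamma> t \<in> H2"
    using assms by auto
  with False have "\<gamma> t $ 3 = 1"
    using H2_nth3_ge_1 by fastforce
  then show ?thesis
    using calibration_comp_has_derivative_at_NP[OF assms] by (simp add: calibration_deriv_def calibration_profile_def)
qed

lemma abs_calibration_diff_le_energy:
  assumes "0 < \<alpha>" and "curve_joining \<gamma> a b p q"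
  shows "ennreal \<bar>calibration \<alpha> v0 q - calibration \<alpha> v0 p\<bar> \<le> energy \<alpha> \<gamma> a b"
proof -
  from assms(2) have "a \<le> b" and pw: "\<gamma> piecewise_C1_differentiable_on {a..b}" and img: "\<gamma> ` {a..b} \<subseteq> H2"
    and "\<gamma> a = p" "\<gamma> b = q"
    by (auto simp: curve_joining_def)
  obtain S where "finite S" and cont: "continuous_on {a..b} \<gamma>"
    and \<gamma>': "\<And>t. t \<in> {a..b} - S \<Longrightarrow> (\<gamma> has_vector_derivative vector_derivative \<gamma> (at t)) (at t)"
    using piecewise_C1_differentiable_onE[OF pw] by blast
  have img': "\<gamma> ` {a<..<b} \<subseteq> H2"
    using img by auto
  have "ennreal \<bar>calibration \<alpha> v0 (\<gamma> b) - calibration \<alpha> v0 (\<gamma> a)\<bar> \<le> energy \<alpha> \<gamma> a b"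
    unfolding energy_def
  proof (rule abs_diff_le_nn_integral_of_deriv_bound[OF \<open>a \<le> b\<close> \<open>finite S\<close>,
        where h = "\<lambda>s. calibration \<alpha> v0 (\<gamma> s)" and h' = "\<lambda>t. calibration_deriv \<alpha> v0 (\<gamma> t) (vector_derivative \<gamma> (at t))"])
    show "continuous_on {a..b} (\<lambda>s. calibration \<alpha> v0 (\<gamma> s))"
      by (rule continuous_on_compose2[OF continuous_on_calibration[OF \<open>0 < \<alpha>\<close>] cont img])
    fix t
    assume t: "t \<in> {a<..<b} - S"
    then have "t \<in> {a<..<b}" "\<gamma> t \<in> H2" "(\<gamma> has_vector_derivative vector_derivative \<gamma> (at t)) (at t)"
      using \<gamma>' img' by auto
    then show "((\<lambda>s. calibration \<alpha> v0 (\<gamma> s)) has_real_derivative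
        calibration_deriv \<alpha> v0 (\<gamma> t) (vector_derivative \<gamma> (at t))) (at t)"
      and "\<bar>calibration_deriv \<alpha> v0 (\<gamma> t) (vector_derivative \<gamma> (at t))\<bar>
        \<le> hdist (\<gamma> t) NP powr \<alpha> * sqrt (lor (vector_derivative \<gamma> (at t)) (vector_derivative \<gamma> (at t)))"
      using \<open>0 < \<alpha>\<close> img'
      by (auto intro!: calibration_comp_has_real_derivative[where U = "{a<..<b}"]
          abs_calibration_deriv_le lor_tangent_H2[where U = "{a<..<b}"])
  qed
  then show ?thesis
    using \<open>\<gamma> a = p\<close> \<open>\<gamma> b = q\<close> by simp
qed

lemma radial_segment_minimizes_energy:
  assumes "0 \<le> u1" "0 \<le> u2" and "curve_joining \<gamma> a b (Psi u1 v0) (Psi u2 v0)"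
  shows "energy \<alpha> (\<lambda>t. Psi (u1 + t * (u2 - u1)) v0) 0 1 \<le> energy \<alpha> \<gamma> a b"
  using energy_ge_nn_integral_dist[OF assms(3), of \<alpha>] assms(1,2) by (simp add: energy_ray hdist_Psi_NP)

lemma geodesic_through_NP_minimizes_energy:
  assumes "0 < \<alpha>" "0 \<le> u1" "0 \<le> u2" and "curve_joining \<gamma> a b (Psi u1 v0) (Psi u2 (v0 + pi))"
  shows "energy \<alpha> (\<lambda>t. geod v0 (u1 - t * (u1 + u2))) 0 1 \<le> energy \<alpha> \<gamma> a b"
proof -
  have "calibration \<alpha> v0 (Psi u1 v0) = powr_antideriv \<alpha> u1"
    "calibration \<alpha> v0 (Psi u2 (v0 + pi)) = - powr_antideriv \<alpha> u2"
    "0 \<le> powr_antideriv \<alpha> u1" "0 \<le> powr_antideriv \<alpha> u2"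
    using assms(1-3) by (simp_all add: calibration_Psi powr_antideriv_pos_exponent)
  then have gap: "\<bar>calibration \<alpha> v0 (Psi u2 (v0 + pi)) - calibration \<alpha> v0 (Psi u1 v0)\<bar>
      = powr_antideriv \<alpha> u1 + powr_antideriv \<alpha> u2"
    by simp
  have "(\<lambda>t. geod v0 (u1 - t * (u1 + u2))) = (\<lambda>t. Psi (u1 + t * - (u1 + u2)) v0)"
    by (simp add: geod_eq_Psi algebra_simps)
  then have "energy \<alpha> (\<lambda>t. geod v0 (u1 - t * (u1 + u2))) 0 1
      = (\<integral>\<^sup>+u\<in>{-u2..u1}. ennreal (\<bar>u\<bar> powr \<alpha>) \<partial>lborel)"
    using assms(2,3) by (simp add: energy_ray min_absorb2 max_absorb1)
  also have "\<dots> = ennreal \<bar>calibration \<alpha> v0 (Psi u2 (v0 + pi)) - calibration \<alpha> v0 (Psi u1 v0)\<bar>"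
    unfolding gap using assms(1-3) by (rule nn_integral_abs_powr_symmetric)
  also have "\<dots> \<le> energy \<alpha> \<gamma> a b"
    by (rule abs_calibration_diff_le_energy[OF assms(1,4)])
  finally show ?thesis .
qed

theorem theorem2p11:
  fixes \<alpha> :: real
  assumes "\<alpha> \<noteq> 0"
  shows
   "(\<forall>v0 u1 u2. u1 \<ge> 0 \<longrightarrow> u2 \<ge> 0 \<longrightarrow>
       (let p1 = Psi u1 v0; p2 = Psi u2 v0; \<sigma> = (\<lambda>t. Psi (u1 + t * (u2 - u1)) v0) in
         curve_joining \<sigma> 0 1 p1 p2 \<and>
         (\<forall>\<gamma> a b. curve_joining \<gamma> a b p1 p2 \<longrightarrow> energy \<alpha> \<sigma> 0 1 \<le> energy \<alpha> \<gamma> a b)))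
    \<and>
    (\<alpha> > 0 \<longrightarrow>
     (\<forall>v0 u1 u2. u1 \<ge> 0 \<longrightarrow> u2 \<ge> 0 \<longrightarrow>
       (let p1 = Psi u1 v0; p2 = Psi u2 (v0 + pi); \<sigma> = (\<lambda>t. geod v0 (u1 - t * (u1 + u2))) in
         curve_joining \<sigma> 0 1 p1 p2 \<and>
         (\<forall>\<gamma> a b. curve_joining \<gamma> a b p1 p2 \<longrightarrow> energy \<alpha> \<sigma> 0 1 \<le> energy \<alpha> \<gamma> a b))))"
proof (intro conjI impI allI)
  \<comment> \<open>Part (1) holds for \<alpha> = 0 as well.\<close>
  fix v0 u1 u2 :: real
  assume "0 \<le> u1" "0 \<le> u2"
  then show "let p1 = Psi u1 v0; p2 = Psi u2 v0; \<sigma> = (\<lambda>t. Psi (u1 + t * (u2 - u1)) v0) in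
      curve_joining \<sigma> 0 1 p1 p2 \<and> (\<forall>\<gamma> a b. curve_joining \<gamma> a b p1 p2 \<longrightarrow> energy \<alpha> \<sigma> 0 1 \<le> energy \<alpha> \<gamma> a b)"
    using ray_curve_joining[of u1 "u2 - u1" v0] radial_segment_minimizes_energy by (simp add: Let_def)
next
  fix v0 u1 u2 :: real
  assume "0 < \<alpha>" "0 \<le> u1" "0 \<le> u2"
  have "(\<lambda>t. geod v0 (u1 - t * (u1 + u2))) = (\<lambda>t. Psi (u1 + t * - (u1 + u2)) v0)"
    by (simp add: geod_eq_Psi algebra_simps)
  then have "curve_joining (\<lambda>t. geod v0 (u1 - t * (u1 + u2))) 0 1 (Psi u1 v0) (Psi u2 (v0 + pi))"
    using ray_curve_joining[of u1 "- (u1 + u2)" v0] by (simp add: Psi_uminus)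
  then show "let p1 = Psi u1 v0; p2 = Psi u2 (v0 + pi); \<sigma> = (\<lambda>t. geod v0 (u1 - t * (u1 + u2))) in
      curve_joining \<sigma> 0 1 p1 p2 \<and> (\<forall>\<gamma> a b. curve_joining \<gamma> a b p1 p2 \<longrightarrow> energy \<alpha> \<sigma> 0 1 \<le> energy \<alpha> \<gamma> a b)"
    using geodesic_through_NP_minimizes_energy[OF \<open>0 < \<alpha>\<close> \<open>0 \<le> u1\<close> \<open>0 \<le> u2\<close>] by (simp add: Let_def)
qed

end
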